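(* Let $(A,\mathcal H)$ be a left Hopf algebroid such that ${}_s\mathcal H$ is $A$-flat. Let $B$ be a right $\mathcal H$-comodule $A^o$-subring of $\mathcal H$ via $t$, with inclusion $\iota$, such that for every $b\in B$, $\beta^{-1}(\iota(b)\otimes_A1)=\sum_i\iota(b_i)\otimes_{A^o}h_i$ for some $\sum_ib_i\otimes_{A^o}h_i\in B\otimes_{A^o}\mathcal H$. Then the map $\mathcal H\otimes_B\mathcal H\to(\mathcal H/\mathcal HB^+)\otimes_A\mathcal H$, $x\otimes_By\mapsto\sum\pi(x_1)\otimes_Ax_2y$ (with $\pi:\mathcal H\to\mathcal H/\mathcal HB^+$ the projection) is well-defined and is an isomorphism.
   Context: $\Bbbk$ is a field. A left bialgebroid $(A,\mathcal H)$: $\Bbbk$-algebras $A,\mathcal H$, algebra maps $s:A\to\mathcal H$, $t:A^o\to\mathcal H$ with commuting images, $A$-bilinear $\Delta:\mathcal H\to\mathcal H\otimes_A\mathcal H$, $\varepsilon:\mathcal H\to A$ (bimodule structure $a\cdot h\cdot b=s(a)t(b)h$; $\mathcal H\otimes_A\mathcal H$ = quotient of $\mathcal H\otimes\mathcal H$ by span of $t(a)x\otimes y-x\otimes s(a)y$), with $(\mathcal H,\Delta,\varepsilon)$ a coassociative counital $A$-coring, $\Delta$ an algebra map into the Takeuchi product $\{\sum x_i\otimes_Ay_i:\sum x_it(a)\otimes_Ay_i=\sum x_i\otimes_Ay_is(a)\ \forall a\}$, $\varepsilon(xs(\varepsilon(y)))=\varepsilon(xy)=\varepsilon(xt(\varepsilon(y)))$,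 $\varepsilon(1)=1$; $\Delta(x)=\sum x_1\otimes_Ax_2$, $\mathcal H^+=\ker\varepsilon$, $B^+=B\cap\mathcal H^+$. Left Hopf algebroid: $\beta:\mathcal H\otimes_{A^o}\mathcal H\to\mathcal H\otimes_A\mathcal H$, $x\otimes_{A^o}y\mapsto\sum x_1\otimes_Ax_2y$ is bijective, where $\mathcal H\otimes_{A^o}\mathcal H$ is the quotient of $\mathcal H\otimes\mathcal H$ by the span of $xt(a)\otimes y-x\otimes t(a)y$. "${}_s\mathcal H$ is $A$-flat": flat as left $A$-module via $s$. In $(\mathcal H/\mathcal HB^+)\otimes_A\mathcal H$ the left factor is a right $A$-module via $t$ and $\mathcal H$ a left $A$-module via $s$; $\mathcal H\otimes_B\mathcal H$ uses the regular right and left $B$-actions. Right $\mathcal H$-comodule $A^o$-subring via $t$: subalgebra $B\supseteq t(A)$ with a coassociative counital right $A$-linear coaction $\delta:B\to B\otimes_A\mathcal H$ ($b\cdot a=t(a)b$; $\mathcal H$ left via $s$) such that $(\iota\otimes_A\mathcal H)\delta=\Delta\iota$. *)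

theory Defs
  imports "HOL-Library.Poly_Mapping"
begin

section \<open>Balanced tensor products as quotients of free abelian groups\<close>

text \<open>An element of the tensor product M \<otimes>_R N is represented by a formal
  Z-linear combination of pairs (m,n), i.e. a finitely supported map
  of type ('m x 'n =>0 int) with keys in M \<times> N; two representatives denote the same
  element iff their difference lies in the subgroup generated by the
  bilinearity and balancing relators.  (Over a k-algebra R containing k
  centrally, balancing over R already forces k-balancing, so the Z-tensor
  quotient coincides with the k-tensor quotient.)
  M is a right R-module via ract, N a left R-module via lact.\<close>

inductive_set tnull ::
  "'m set \<Rightarrow> ('m \<Rightarrow> 'm \<Rightarrow> 'm) \<Rightarrow> 'n set \<Rightarrow> ('n \<Rightarrow> 'n \<Rightarrow> 'n) \<Rightarrow> 'r set
   \<Rightarrow> ('m \<Rightarrow> 'r \<Rightarrow> 'm) \<Rightarrow> ('r \<Rightarrow> 'n \<Rightarrow> 'n) \<Rightarrow> ('m \<times> 'n \<Rightarrow>\<^sub>0 int) set"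
  for M addM N addN R ract lact where
  addl: "\<lbrakk>m \<in> M; m' \<in> M; n \<in> N\<rbrakk> \<Longrightarrow>
     frag_of (addM m m', n) - frag_of (m, n) - frag_of (m', n) \<in> tnull M addM N addN R ract lact"
| addr: "\<lbrakk>m \<in> M; n \<in> N; n' \<in> N\<rbrakk> \<Longrightarrow>
     frag_of (m, addN n n') - frag_of (m, n) - frag_of (m, n') \<in> tnull M addM N addN R ract lact"
| bal: "\<lbrakk>m \<in> M; r \<in> R; n \<in> N\<rbrakk> \<Longrightarrow>
     frag_of (ract m r, n) - frag_of (m, lact r n) \<in> tnull M addM N addN R ract lact"
| zero: "0 \<in> tnull M addM N addN R ract lact"
| plus: "\<lbrakk>z \<in> tnull M addM N addN R ract lact; w \<in> tnull M addM N addN R ract lact\<rbrakk>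
     \<Longrightarrow> z + w \<in> tnull M addM N addN R ract lact"
| neg: "z \<in> tnull M addM N addN R ract lact \<Longrightarrow> - z \<in> tnull M addM N addN R ract lact"

inductive_set tnull3 ::
  "'m1 set \<Rightarrow> ('m1 \<Rightarrow> 'm1 \<Rightarrow> 'm1) \<Rightarrow> 'm2 set \<Rightarrow> ('m2 \<Rightarrow> 'm2 \<Rightarrow> 'm2)
   \<Rightarrow> 'm3 set \<Rightarrow> ('m3 \<Rightarrow> 'm3 \<Rightarrow> 'm3) \<Rightarrow> 'r set
   \<Rightarrow> ('m1 \<Rightarrow> 'r \<Rightarrow> 'm1) \<Rightarrow> ('r \<Rightarrow> 'm2 \<Rightarrow> 'm2) \<Rightarrow> ('m2 \<Rightarrow> 'r \<Rightarrow> 'm2) \<Rightarrow> ('r \<Rightarrow> 'm3 \<Rightarrow> 'm3)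
   \<Rightarrow> ('m1 \<times> 'm2 \<times> 'm3 \<Rightarrow>\<^sub>0 int) set"
  for M1 add1 M2 add2 M3 add3 R ract1 lact2 ract2 lact3 where
  add1: "\<lbrakk>x \<in> M1; x' \<in> M1; y \<in> M2; z \<in> M3\<rbrakk> \<Longrightarrow>
     frag_of (add1 x x', y, z) - frag_of (x, y, z) - frag_of (x', y, z)
       \<in> tnull3 M1 add1 M2 add2 M3 add3 R ract1 lact2 ract2 lact3"
| add2: "\<lbrakk>x \<in> M1; y \<in> M2; y' \<in> M2; z \<in> M3\<rbrakk> \<Longrightarrow>
     frag_of (x, add2 y y', z) - frag_of (x, y, z) - frag_of (x, y', z)
       \<in> tnull3 M1 add1 M2 add2 M3 add3 R ract1 lact2 ract2 lact3"
| add3: "\<lbrakk>x \<in> M1; y \<in> M2; z \<in> M3; z' \<in> M3\<rbrakk> \<Longrightarrow>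
     frag_of (x, y, add3 z z') - frag_of (x, y, z) - frag_of (x, y, z')
       \<in> tnull3 M1 add1 M2 add2 M3 add3 R ract1 lact2 ract2 lact3"
| bal12: "\<lbrakk>x \<in> M1; r \<in> R; y \<in> M2; z \<in> M3\<rbrakk> \<Longrightarrow>
     frag_of (ract1 x r, y, z) - frag_of (x, lact2 r y, z)
       \<in> tnull3 M1 add1 M2 add2 M3 add3 R ract1 lact2 ract2 lact3"
| bal23: "\<lbrakk>x \<in> M1; y \<in> M2; r \<in> R; z \<in> M3\<rbrakk> \<Longrightarrow>
     frag_of (x, ract2 y r, z) - frag_of (x, y, lact3 r z)
       \<in> tnull3 M1 add1 M2 add2 M3 add3 R ract1 lact2 ract2 lact3"
| zero: "0 \<in> tnull3 M1 add1 M2 add2 M3 add3 R ract1 lact2 ract2 lact3"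
| plus: "\<lbrakk>z \<in> tnull3 M1 add1 M2 add2 M3 add3 R ract1 lact2 ract2 lact3;
          w \<in> tnull3 M1 add1 M2 add2 M3 add3 R ract1 lact2 ract2 lact3\<rbrakk>
     \<Longrightarrow> z + w \<in> tnull3 M1 add1 M2 add2 M3 add3 R ract1 lact2 ract2 lact3"
| neg: "z \<in> tnull3 M1 add1 M2 add2 M3 add3 R ract1 lact2 ract2 lact3
     \<Longrightarrow> - z \<in> tnull3 M1 add1 M2 add2 M3 add3 R ract1 lact2 ract2 lact3"

definition fsum :: "('x \<Rightarrow> 'h::ring_1) \<Rightarrow> ('x \<Rightarrow>\<^sub>0 int) \<Rightarrow> 'h" where
  "fsum f z = (\<Sum>p \<in> Poly_Mapping.keys z. of_int (Poly_Mapping.lookup z p) * f p)"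

definition nullA :: "('a \<Rightarrow> 'h::ring_1) \<Rightarrow> ('a \<Rightarrow> 'h) \<Rightarrow> ('h \<times> 'h \<Rightarrow>\<^sub>0 int) set" where
  "nullA s t = tnull UNIV (+) UNIV (+) UNIV (\<lambda>x a. t a * x) (\<lambda>a y. s a * y)"

definition nullA3 :: "('a \<Rightarrow> 'h::ring_1) \<Rightarrow> ('a \<Rightarrow> 'h) \<Rightarrow> ('h \<times> 'h \<times> 'h \<Rightarrow>\<^sub>0 int) set" where
  "nullA3 s t = tnull3 UNIV (+) UNIV (+) UNIV (+) UNIV
      (\<lambda>x a. t a * x) (\<lambda>a y. s a * y) (\<lambda>y a. t a * y) (\<lambda>a z. s a * z)"

definition nullAo :: "('a \<Rightarrow> 'h::ring_1) \<Rightarrow> ('h \<times> 'h \<Rightarrow>\<^sub>0 int) set" where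
  "nullAo t = tnull UNIV (+) UNIV (+) UNIV (\<lambda>x a. x * t a) (\<lambda>a y. t a * y)"

definition Delta_id :: "('h \<Rightarrow> ('h \<times> 'h \<Rightarrow>\<^sub>0 int)) \<Rightarrow> ('h \<times> 'h \<Rightarrow>\<^sub>0 int) \<Rightarrow> ('h \<times> 'h \<times> 'h \<Rightarrow>\<^sub>0 int)" where
  "Delta_id \<Delta> = frag_extend (\<lambda>(x, y). frag_extend (\<lambda>(u, v). frag_of (u, v, y)) (\<Delta> x))"

definition id_Delta :: "('h \<Rightarrow> ('h \<times> 'h \<Rightarrow>\<^sub>0 int)) \<Rightarrow> ('h \<times> 'h \<Rightarrow>\<^sub>0 int) \<Rightarrow> ('h \<times> 'h \<times> 'h \<Rightarrow>\<^sub>0 int)" where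
  "id_Delta \<Delta> = frag_extend (\<lambda>(x, y). frag_extend (\<lambda>(u, v). frag_of (x, u, v)) (\<Delta> y))"

definition k_algebra :: "('k::field \<Rightarrow> 'r::ring_1) \<Rightarrow> bool" where
  "k_algebra \<eta> \<longleftrightarrow> (\<forall>c d. \<eta> (c + d) = \<eta> c + \<eta> d \<and> \<eta> (c * d) = \<eta> c * \<eta> d) \<and> \<eta> 1 = 1
     \<and> (\<forall>c x. \<eta> c * x = x * \<eta> c)"

section \<open>Left bialgebroids and left Hopf algebroids\<close>

text \<open>The comultiplication \<Delta> : H \<rightarrow> H \<otimes>_A H is given by a choice of representatives
  \<Delta> x (any representative); all axioms are imposed modulo the tensor relations.
  k is the ground field, \<eta>A and \<eta>H the structure maps of the k-algebras A and H.\<close>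

definition left_bialgebroid ::
  "('k::field \<Rightarrow> 'a::ring_1) \<Rightarrow> ('k \<Rightarrow> 'h::ring_1) \<Rightarrow> ('a \<Rightarrow> 'h) \<Rightarrow> ('a \<Rightarrow> 'h)
   \<Rightarrow> ('h \<Rightarrow> ('h \<times> 'h \<Rightarrow>\<^sub>0 int)) \<Rightarrow> ('h \<Rightarrow> 'a) \<Rightarrow> bool" where
  "left_bialgebroid \<eta>A \<eta>H s t \<Delta> \<epsilon> \<longleftrightarrow>
     k_algebra \<eta>A \<and> k_algebra \<eta>H
   \<comment> \<open>s : A \<rightarrow> H and t : A^o \<rightarrow> H are k-algebra maps with commuting images\<close>
   \<and> (\<forall>a b. s (a + b) = s a + s b \<and> s (a * b) = s a * s b) \<and> s 1 = 1
   \<and> (\<forall>a b. t (a + b) = t a + t b \<and> t (a * b) = t b * t a) \<and> t 1 = 1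
   \<and> (\<forall>c. s (\<eta>A c) = \<eta>H c \<and> t (\<eta>A c) = \<eta>H c)
   \<and> (\<forall>a b. s a * t b = t b * s a)
   \<comment> \<open>\<Delta> is additive and A-bilinear (a\<cdot>h\<cdot>b = s(a)t(b)h)\<close>
   \<and> (\<forall>x y. \<Delta> (x + y) - \<Delta> x - \<Delta> y \<in> nullA s t)
   \<and> (\<forall>a b h. \<Delta> (s a * t b * h)
          - frag_extend (\<lambda>(x, y). frag_of (s a * x, t b * y)) (\<Delta> h) \<in> nullA s t)
   \<comment> \<open>\<epsilon> is additive and A-bilinear\<close>
   \<and> (\<forall>x y. \<epsilon> (x + y) = \<epsilon> x + \<epsilon> y)
   \<and> (\<forall>a b h. \<epsilon> (s a * t b * h) = a * \<epsilon> h * b)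
   \<comment> \<open>coassociativity and counitality\<close>
   \<and> (\<forall>h. Delta_id \<Delta> (\<Delta> h) - id_Delta \<Delta> (\<Delta> h) \<in> nullA3 s t)
   \<and> (\<forall>h. fsum (\<lambda>(x, y). s (\<epsilon> x) * y) (\<Delta> h) = h)
   \<and> (\<forall>h. fsum (\<lambda>(x, y). t (\<epsilon> y) * x) (\<Delta> h) = h)
   \<comment> \<open>\<Delta> takes values in the Takeuchi product and is an algebra map into it\<close>
   \<and> (\<forall>h a. frag_extend (\<lambda>(x, y). frag_of (x * t a, y)) (\<Delta> h)
          - frag_extend (\<lambda>(x, y). frag_of (x, y * s a)) (\<Delta> h) \<in> nullA s t)
   \<and> (\<forall>x y. \<Delta> (x * y)
          - frag_extend (\<lambda>(x1, x2). frag_extend (\<lambda>(y1, y2). frag_of (x1 * y1, x2 * y2)) (\<Delta> y)) (\<Delta> x)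
          \<in> nullA s t)
   \<and> \<Delta> 1 - frag_of (1, 1) \<in> nullA s t
   \<comment> \<open>counit axioms\<close>
   \<and> (\<forall>x y. \<epsilon> (x * s (\<epsilon> y)) = \<epsilon> (x * y) \<and> \<epsilon> (x * y) = \<epsilon> (x * t (\<epsilon> y)))
   \<and> \<epsilon> 1 = 1"

definition beta :: "('h::ring_1 \<Rightarrow> ('h \<times> 'h \<Rightarrow>\<^sub>0 int)) \<Rightarrow> ('h \<times> 'h \<Rightarrow>\<^sub>0 int) \<Rightarrow> ('h \<times> 'h \<Rightarrow>\<^sub>0 int)" where
  "beta \<Delta> = frag_extend (\<lambda>(x, y). frag_extend (\<lambda>(u, v). frag_of (u, v * y)) (\<Delta> x))"

definition left_hopf_algebroid ::
  "('k::field \<Rightarrow> 'a::ring_1) \<Rightarrow> ('k \<Rightarrow> 'h::ring_1) \<Rightarrow> ('a \<Rightarrow> 'h) \<Rightarrow> ('a \<Rightarrow> 'h)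
   \<Rightarrow> ('h \<Rightarrow> ('h \<times> 'h \<Rightarrow>\<^sub>0 int)) \<Rightarrow> ('h \<Rightarrow> 'a) \<Rightarrow> bool" where
  "left_hopf_algebroid \<eta>A \<eta>H s t \<Delta> \<epsilon> \<longleftrightarrow>
     left_bialgebroid \<eta>A \<eta>H s t \<Delta> \<epsilon>
   \<and> (\<forall>z. beta \<Delta> z \<in> nullA s t \<longrightarrow> z \<in> nullAo t)
   \<and> (\<forall>w. \<exists>z. beta \<Delta> z - w \<in> nullA s t)"

definition right_module :: "'m set \<Rightarrow> ('m \<Rightarrow> 'm \<Rightarrow> 'm) \<Rightarrow> ('m \<Rightarrow> 'a::ring_1 \<Rightarrow> 'm) \<Rightarrow> bool" where
  "right_module M add act \<longleftrightarrow>
     (\<forall>x\<in>M. \<forall>y\<in>M. add x y \<in> M) \<and> (\<forall>x\<in>M. \<forall>a. act x a \<in> M)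
   \<and> (\<forall>x\<in>M. \<forall>y\<in>M. \<forall>z\<in>M. add (add x y) z = add x (add y z))
   \<and> (\<forall>x\<in>M. \<forall>y\<in>M. add x y = add y x)
   \<and> (\<exists>e\<in>M. (\<forall>x\<in>M. add e x = x) \<and> (\<forall>x\<in>M. \<exists>y\<in>M. add x y = e))
   \<and> (\<forall>x\<in>M. \<forall>y\<in>M. \<forall>a. act (add x y) a = add (act x a) (act y a))
   \<and> (\<forall>x\<in>M. \<forall>a b. act x (a + b) = add (act x a) (act x b))
   \<and> (\<forall>x\<in>M. \<forall>a b. act x (a * b) = act (act x a) b)
   \<and> (\<forall>x\<in>M. act x 1 = x)"

text \<open>Modules are taken with carriers in the
  universe type 'a list set (which contains isomorphic copies of all finitely generated
  right A-modules A^n/K).\<close>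
definition s_flat :: "('a::ring_1 \<Rightarrow> 'h::ring_1) \<Rightarrow> bool" where
  "s_flat s \<longleftrightarrow>
     (\<forall>(N :: 'a list set set) N' add act.
        right_module N add act \<and> N' \<subseteq> N \<and> right_module N' add act \<longrightarrow>
        (\<forall>z. Poly_Mapping.keys z \<subseteq> N' \<times> UNIV \<longrightarrow>
              z \<in> tnull N add UNIV (+) UNIV act (\<lambda>a y. s a * y) \<longrightarrow>
              z \<in> tnull N' add UNIV (+) UNIV act (\<lambda>a y. s a * y)))"

definition nullBA :: "('a \<Rightarrow> 'h::ring_1) \<Rightarrow> ('a \<Rightarrow> 'h) \<Rightarrow> 'h set \<Rightarrow> ('h \<times> 'h \<Rightarrow>\<^sub>0 int) set" where
  "nullBA s t B = tnull B (+) UNIV (+) UNIV (\<lambda>b a. t a * b) (\<lambda>a y. s a * y)"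

definition nullBA3 :: "('a \<Rightarrow> 'h::ring_1) \<Rightarrow> ('a \<Rightarrow> 'h) \<Rightarrow> 'h set \<Rightarrow> ('h \<times> 'h \<times> 'h \<Rightarrow>\<^sub>0 int) set" where
  "nullBA3 s t B = tnull3 B (+) UNIV (+) UNIV (+) UNIV
      (\<lambda>b a. t a * b) (\<lambda>a y. s a * y) (\<lambda>y a. t a * y) (\<lambda>a z. s a * z)"

definition comodule_subring ::
  "('a::ring_1 \<Rightarrow> 'h::ring_1) \<Rightarrow> ('a \<Rightarrow> 'h) \<Rightarrow> ('h \<Rightarrow> ('h \<times> 'h \<Rightarrow>\<^sub>0 int)) \<Rightarrow> ('h \<Rightarrow> 'a)
   \<Rightarrow> 'h set \<Rightarrow> ('h \<Rightarrow> ('h \<times> 'h \<Rightarrow>\<^sub>0 int)) \<Rightarrow> bool" where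
  "comodule_subring s t \<Delta> \<epsilon> B \<delta> \<longleftrightarrow>
   \<comment> \<open>B is a subalgebra containing t(A)\<close>
     (\<forall>x\<in>B. \<forall>y\<in>B. x + y \<in> B \<and> x * y \<in> B) \<and> (\<forall>x\<in>B. - x \<in> B) \<and> 1 \<in> B
   \<and> (\<forall>a. t a \<in> B)
   \<comment> \<open>\<delta> lands in B \<otimes>_A H, is additive and right A-linear\<close>
   \<and> (\<forall>b\<in>B. Poly_Mapping.keys (\<delta> b) \<subseteq> B \<times> UNIV)
   \<and> (\<forall>b\<in>B. \<forall>b'\<in>B. \<delta> (b + b') - \<delta> b - \<delta> b' \<in> nullBA s t B)
   \<and> (\<forall>b\<in>B. \<forall>a. \<delta> (t a * b) - frag_extend (\<lambda>(c, y). frag_of (c, t a * y)) (\<delta> b) \<in> nullBA s t B)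
   \<comment> \<open>coassociativity and counitality\<close>
   \<and> (\<forall>b\<in>B. Delta_id \<delta> (\<delta> b) - id_Delta \<Delta> (\<delta> b) \<in> nullBA3 s t B)
   \<and> (\<forall>b\<in>B. fsum (\<lambda>(c, y). t (\<epsilon> y) * c) (\<delta> b) = b)
   \<comment> \<open>(\<iota> \<otimes>_A H) \<circ> \<delta> = \<Delta> \<circ> \<iota>\<close>
   \<and> (\<forall>b\<in>B. \<delta> b - \<Delta> b \<in> nullA s t)"

definition HBplus :: "('h::ring_1 \<Rightarrow> 'a::ring_1) \<Rightarrow> 'h set \<Rightarrow> 'h set" where
  "HBplus \<epsilon> B = {(\<Sum>i<(n::nat). h i * b i) | n h b. \<forall>i<n. b i \<in> B \<and> \<epsilon> (b i) = 0}"

definition qproj :: "'h::ring_1 set \<Rightarrow> 'h \<Rightarrow> 'h set" where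
  "qproj N x = {y. y - x \<in> N}"

text \<open>(H/N) \<otimes>_A H, where H/N is a right A-module via \<pi>(x)\<cdot>a = \<pi>(t(a)x).\<close>
definition nullQ :: "('a \<Rightarrow> 'h::ring_1) \<Rightarrow> ('a \<Rightarrow> 'h) \<Rightarrow> 'h set \<Rightarrow> ('h set \<times> 'h \<Rightarrow>\<^sub>0 int) set" where
  "nullQ s t N = tnull (qproj N ` UNIV) (\<lambda>C D. \<Union>x\<in>C. \<Union>y\<in>D. qproj N (x + y)) UNIV (+) UNIV
      (\<lambda>C a. \<Union>x\<in>C. qproj N (t a * x)) (\<lambda>a y. s a * y)"

definition nullB :: "'h::ring_1 set \<Rightarrow> ('h \<times> 'h \<Rightarrow>\<^sub>0 int) set" where
  "nullB B = tnull UNIV (+) UNIV (+) B (*) (*)"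

definition canmap :: "('h::ring_1 \<Rightarrow> ('h \<times> 'h \<Rightarrow>\<^sub>0 int)) \<Rightarrow> 'h set \<Rightarrow> ('h \<times> 'h \<Rightarrow>\<^sub>0 int)
   \<Rightarrow> ('h set \<times> 'h \<Rightarrow>\<^sub>0 int)" where
  "canmap \<Delta> N = frag_extend (\<lambda>(x, y). frag_extend (\<lambda>(u, v). frag_of (qproj N u, v * y)) (\<Delta> x))"

end

theory Submission
  imports Defs
begin

text \<open>
  Let \<open>\<gamma> x\<close> be a representative of \<open>\<beta>\<^sup>-\<^sup>1(x \<otimes>\<^sub>A 1)\<close> (the translation map). The inverse of the
  canonical map sends \<open>\<pi>(x) \<otimes>\<^sub>A y\<close> to \<open>\<gamma>(x)(1 \<otimes> y)\<close>, read in \<open>H \<otimes>\<^sub>B H\<close>, which is a quotient of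
  \<open>H \<otimes>\<^sub>A\<^sub>o H\<close> because \<open>t(A) \<subseteq> B\<close>. It is well defined because \<open>\<gamma>\<close> vanishes on \<open>HB\<^sup>+\<close> in
  \<open>H \<otimes>\<^sub>B H\<close>: for \<open>b \<in> B\<^sup>+\<close> the Galois hypothesis gives \<open>\<beta>\<^sup>-\<^sup>1(b \<otimes> 1) = \<Sum> c \<otimes> d\<close> with all
  \<open>c \<in> B\<close>, so \<open>\<gamma>(hb) = \<Sum> p c \<otimes> d q\<close> (summed over \<open>\<gamma>(h) = \<Sum> p \<otimes> q\<close>) is balanced to
  \<open>\<Sum> p \<otimes> (\<Sum> c d) q\<close>, and \<open>\<Sum> c d = s(\<epsilon> b) = 0\<close>. Since the canonical map is \<open>(\<pi> \<otimes> id) \<circ> \<beta>\<close>,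
  both composites are the identity. The canonical map itself is balanced over \<open>B\<close> because
  \<open>\<Delta>(m b) = \<Delta>(m) \<delta>(b)\<close>, \<open>\<pi>(x b\<^sub>0) = \<pi>(x t(\<epsilon> b\<^sub>0))\<close>, and the Takeuchi property moves \<open>t(\<epsilon> b\<^sub>0)\<close>
  across the tensor sign, where the counit recombines \<open>\<Sum> s(\<epsilon> b\<^sub>0) b\<^sub>1 = b\<close>.
\<close>

section \<open>Formal sums modulo relations\<close>

lemma frag_cmul_diff_distrib2: "frag_cmul k (a - b) = frag_cmul k a - frag_cmul k b"
  by (rule poly_mapping_eqI) (simp add: lookup_minus algebra_simps)

lemma frag_extend_fun_diff:
  "frag_extend (\<lambda>x. f x - g x) c = frag_extend f c - frag_extend g c"
  unfolding frag_extend_def by (simp add: frag_cmul_diff_distrib2 sum_subtractf)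

lemma frag_extend_frag_extend:
  "frag_extend f (frag_extend g c) = frag_extend (\<lambda>x. frag_extend f (g x)) c"
  using subset_UNIV by (induction c rule: frag_induction) (auto simp: frag_extend_diff)

definition additive_subgroup :: "('x \<Rightarrow>\<^sub>0 int) set \<Rightarrow> bool" where
  "additive_subgroup T \<longleftrightarrow> 0 \<in> T \<and> (\<forall>x\<in>T. \<forall>y\<in>T. x - y \<in> T)"

lemma additive_subgroup_zero: "additive_subgroup T \<Longrightarrow> 0 \<in> T"
  by (simp add: additive_subgroup_def)

lemma additive_subgroup_diff: "additive_subgroup T \<Longrightarrow> x \<in> T \<Longrightarrow> y \<in> T \<Longrightarrow> x - y \<in> T"
  by (simp add: additive_subgroup_def)

lemma additive_subgroup_uminus: "additive_subgroup T \<Longrightarrow> x \<in> T \<Longrightarrow> - x \<in> T"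
  using additive_subgroup_diff[of T 0 x] by (simp add: additive_subgroup_zero)

lemma additive_subgroup_add: "additive_subgroup T \<Longrightarrow> x \<in> T \<Longrightarrow> y \<in> T \<Longrightarrow> x + y \<in> T"
  using additive_subgroup_diff[of T x "- y"] by (simp add: additive_subgroup_uminus)

lemma frag_extend_in_additive_subgroup:
  assumes "additive_subgroup T" "\<And>x. x \<in> Poly_Mapping.keys c \<Longrightarrow> f x \<in> T"
  shows "frag_extend f c \<in> T"
  using order_refl[of "Poly_Mapping.keys c"]
  by (induction c rule: frag_induction)
    (auto simp: frag_extend_diff assms additive_subgroup_zero additive_subgroup_diff)

definition cong_mod :: "('x \<Rightarrow>\<^sub>0 int) set \<Rightarrow> ('x \<Rightarrow>\<^sub>0 int) \<Rightarrow> ('x \<Rightarrow>\<^sub>0 int) \<Rightarrow> bool" where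
  "cong_mod T x y \<longleftrightarrow> x - y \<in> T"

lemma cong_mod_zero_right [simp]: "cong_mod T x 0 \<longleftrightarrow> x \<in> T"
  by (simp add: cong_mod_def)

lemma cong_mod_refl: "additive_subgroup T \<Longrightarrow> cong_mod T x x"
  by (simp add: cong_mod_def additive_subgroup_zero)

lemma cong_mod_sym: "additive_subgroup T \<Longrightarrow> cong_mod T x y \<Longrightarrow> cong_mod T y x"
  unfolding cong_mod_def using additive_subgroup_uminus by fastforce

lemma cong_mod_trans:
  "additive_subgroup T \<Longrightarrow> cong_mod T x y \<Longrightarrow> cong_mod T y z \<Longrightarrow> cong_mod T x z"
  unfolding cong_mod_def using additive_subgroup_add by fastforce

lemma cong_mod_add:
  "additive_subgroup T \<Longrightarrow> cong_mod T x x' \<Longrightarrow> cong_mod T y y' \<Longrightarrow> cong_mod T (x + y) (x' + y')"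
  unfolding cong_mod_def using additive_subgroup_add[of T "x - x'" "y - y'"]
  by (simp add: algebra_simps)

lemma cong_mod_diff:
  "additive_subgroup T \<Longrightarrow> cong_mod T x x' \<Longrightarrow> cong_mod T y y' \<Longrightarrow> cong_mod T (x - y) (x' - y')"
  unfolding cong_mod_def using additive_subgroup_diff[of T "x - x'" "y - y'"]
  by (simp add: algebra_simps)

lemma cong_mod_mem: "additive_subgroup T \<Longrightarrow> cong_mod T x y \<Longrightarrow> y \<in> T \<Longrightarrow> x \<in> T"
  using cong_mod_trans[of T x y 0] by simp

lemma frag_extend_cong_mod:
  assumes "additive_subgroup T" "\<And>x. x \<in> Poly_Mapping.keys c \<Longrightarrow> cong_mod T (f x) (g x)"
  shows "cong_mod T (frag_extend f c) (frag_extend g c)"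
  using frag_extend_in_additive_subgroup[of T c "\<lambda>x. f x - g x"] assms
  by (simp add: cong_mod_def frag_extend_fun_diff)

lemma additive_subgroup_tnull: "additive_subgroup (tnull M addM N addN R ract lact)"
  unfolding additive_subgroup_def
  by (metis diff_conv_add_uminus tnull.neg tnull.plus tnull.zero)

text \<open>The universal property of the tensor product, on representatives.\<close>

lemma frag_extend_tnull:
  assumes T: "additive_subgroup T" and z: "z \<in> tnull M addM N addN R ract lact"
    and addl: "\<And>m m' n. m \<in> M \<Longrightarrow> m' \<in> M \<Longrightarrow> n \<in> N \<Longrightarrow> F (addM m m') n - F m n - F m' n \<in> T"
    and addr: "\<And>m n n'. m \<in> M \<Longrightarrow> n \<in> N \<Longrightarrow> n' \<in> N \<Longrightarrow> F m (addN n n') - F m n - F m n' \<in> T"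
    and bal: "\<And>m r n. m \<in> M \<Longrightarrow> r \<in> R \<Longrightarrow> n \<in> N \<Longrightarrow> F (ract m r) n - F m (lact r n) \<in> T"
  shows "frag_extend (case_prod F) z \<in> T"
  using z
proof induction
  case zero
  show ?case by (simp add: T additive_subgroup_zero)
next
  case (plus z w)
  then show ?case by (simp add: T frag_extend_add additive_subgroup_add)
next
  case (neg z)
  then show ?case by (simp add: T frag_extend_minus additive_subgroup_uminus)
qed (simp_all add: frag_extend_diff addl addr bal)

lemma tnull_frag_of_zero:
  assumes "m \<in> M"
  shows "frag_of (m, 0::'n::monoid_add) \<in> tnull M addM UNIV (+) R ract lact"
proof -
  have "frag_of (m, 0 + 0) - frag_of (m, 0) - frag_of (m, 0::'n)
          \<in> tnull M addM UNIV (+) R ract lact"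
    using assms by (intro tnull.addr) auto
  then show ?thesis
    using tnull.neg by fastforce
qed

lemma fsum_zero [simp]: "fsum f 0 = 0"
  by (simp add: fsum_def)

lemma fsum_frag_of [simp]: "fsum f (frag_of p) = f p"
  by (simp add: fsum_def)

lemma fsum_eq_sum_superset:
  "finite S \<Longrightarrow> Poly_Mapping.keys z \<subseteq> S \<Longrightarrow>
   fsum f z = (\<Sum>p\<in>S. of_int (Poly_Mapping.lookup z p) * f p)"
  unfolding fsum_def by (rule sum.mono_neutral_left) (auto simp: in_keys_iff)

lemma fsum_add: "fsum f (z + w) = fsum f z + fsum f w"
proof -
  let ?S = "Poly_Mapping.keys z \<union> Poly_Mapping.keys w"
  have "finite ?S" "Poly_Mapping.keys (z + w) \<subseteq> ?S"
    by (simp_all add: keys_add)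
  then show ?thesis
    by (simp add: fsum_eq_sum_superset[of ?S] lookup_add distrib_right sum.distrib)
qed

lemma fsum_diff: "fsum f (z - w) = fsum f z - fsum f w"
  using fsum_add[of f "z - w" w] by (simp add: algebra_simps)

lemma fsum_uminus: "fsum f (- z) = - fsum f z"
  using fsum_diff[of f 0 z] by simp

lemma fsum_frag_extend: "fsum f (frag_extend g c) = fsum (\<lambda>x. fsum f (g x)) c"
  using subset_UNIV
  by (induction c rule: frag_induction) (auto simp: frag_extend_diff fsum_diff)

lemma fsum_mult_right: "fsum (\<lambda>x. f x * a) z = fsum f z * a"
  unfolding fsum_def by (simp add: sum_distrib_right mult.assoc)

lemma tnull_frag_of_fsum:
  assumes "m \<in> M"
  shows "cong_mod (tnull M addM UNIV (+) R ract lact)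
           (frag_extend (\<lambda>x. frag_of (m, g x)) z) (frag_of (m, fsum g z))"
  using subset_UNIV
proof (induction z rule: frag_induction)
  case zero
  show ?case
    using tnull_frag_of_zero[OF assms] tnull.neg by (fastforce simp: cong_mod_def)
next
  case (one x)
  show ?case by (simp add: cong_mod_def tnull.zero)
next
  case (diff a b)
  let ?T = "tnull M addM UNIV (+) R ract lact" and ?E = "frag_extend (\<lambda>x. frag_of (m, g x))"
  have "?E a - frag_of (m, fsum g a) \<in> ?T" "?E b - frag_of (m, fsum g b) \<in> ?T"
    using diff by (simp_all add: cong_mod_def)
  moreover have "frag_of (m, fsum g a) - frag_of (m, fsum g a - fsum g b)
          - frag_of (m, fsum g b) \<in> ?T"
    using assms
      tnull.addr[where n="fsum g a - fsum g b" and n'="fsum g b" and N=UNIV and addN="(+)"]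
    by simp
  ultimately have "(?E a - frag_of (m, fsum g a)) - (?E b - frag_of (m, fsum g b))
     + (frag_of (m, fsum g a) - frag_of (m, fsum g a - fsum g b) - frag_of (m, fsum g b)) \<in> ?T"
    by (rule additive_subgroup_add[OF additive_subgroup_tnull
          additive_subgroup_diff[OF additive_subgroup_tnull]])
  then show ?case
    by (simp add: cong_mod_def frag_extend_diff fsum_diff)
qed

section \<open>The left ideal \<open>HB\<^sup>+\<close> and its cosets\<close>

lemma mem_HBplus_iff:
  "x \<in> HBplus \<epsilon> B \<longleftrightarrow>
   (\<exists>(n::nat) hs bs. x = (\<Sum>i<n. hs i * bs i) \<and> (\<forall>i<n. bs i \<in> B \<and> \<epsilon> (bs i) = 0))"
  by (simp add: HBplus_def)

lemma HBplus_zero: "0 \<in> HBplus \<epsilon> B"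
  unfolding HBplus_def by (rule CollectI, rule exI[of _ 0]) auto

lemma HBplus_add_mult:
  assumes "x \<in> HBplus \<epsilon> B" "b \<in> B" "\<epsilon> b = 0"
  shows "x + h * b \<in> HBplus \<epsilon> B"
proof -
  obtain n hs bs where x: "x = (\<Sum>i<(n::nat). hs i * bs i)"
    and bs: "\<forall>i<n. bs i \<in> B \<and> \<epsilon> (bs i) = 0"
    using assms(1) unfolding mem_HBplus_iff by blast
  have "x + h * b = (\<Sum>i<Suc n. (hs(n := h)) i * (bs(n := b)) i)"
    by (simp add: x)
  moreover have "\<forall>i<Suc n. (bs(n := b)) i \<in> B \<and> \<epsilon> ((bs(n := b)) i) = 0"
    using bs assms by (auto simp: less_Suc_eq)
  ultimately show ?thesis
    unfolding mem_HBplus_iff by (intro exI conjI)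
qed

lemma HBplus_induct [consumes 1, case_names zero add_mult]:
  assumes "x \<in> HBplus \<epsilon> B" and "P 0"
    and "\<And>x h b. x \<in> HBplus \<epsilon> B \<Longrightarrow> P x \<Longrightarrow> b \<in> B \<Longrightarrow> \<epsilon> b = 0 \<Longrightarrow> P (x + h * b)"
  shows "P x"
proof -
  obtain n hs bs where x: "x = (\<Sum>i<(n::nat). hs i * bs i)"
    and bs: "\<forall>i<n. bs i \<in> B \<and> \<epsilon> (bs i) = 0"
    using assms(1) unfolding mem_HBplus_iff by blast
  have "(\<Sum>i<k. hs i * bs i) \<in> HBplus \<epsilon> B \<and> P (\<Sum>i<k. hs i * bs i)" if "k \<le> n" for k
    using that
  proof (induction k)
    case 0
    then show ?case using assms(2) HBplus_zero by simp
  next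
    case (Suc k)
    then have "bs k \<in> B" "\<epsilon> (bs k) = 0"
      using bs by auto
    with Suc show ?case
      by (auto intro: HBplus_add_mult assms(3))
  qed
  then show ?thesis using x by simp
qed

lemma HBplus_add:
  assumes "x \<in> HBplus \<epsilon> B" "y \<in> HBplus \<epsilon> B"
  shows "x + y \<in> HBplus \<epsilon> B"
  using assms(2)
  by (induction y rule: HBplus_induct) (simp_all add: assms(1) HBplus_add_mult flip: add.assoc)

lemma HBplus_left_mult: "x \<in> HBplus \<epsilon> B \<Longrightarrow> c * x \<in> HBplus \<epsilon> B"
  by (induction x rule: HBplus_induct)
    (simp_all add: HBplus_zero HBplus_add_mult distrib_left flip: mult.assoc)

lemma HBplus_diff: "x \<in> HBplus \<epsilon> B \<Longrightarrow> y \<in> HBplus \<epsilon> B \<Longrightarrow> x - y \<in> HBplus \<epsilon> B"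
  using HBplus_add[of x \<epsilon> B "(- 1) * y"] HBplus_left_mult[of y \<epsilon> B "- 1"] by simp

lemma HBplus_mult: "b \<in> B \<Longrightarrow> \<epsilon> b = 0 \<Longrightarrow> h * b \<in> HBplus \<epsilon> B"
  using HBplus_add_mult[OF HBplus_zero] by simp

lemma qproj_self: "x \<in> qproj (HBplus \<epsilon> B) x"
  by (simp add: qproj_def HBplus_zero)

lemma qproj_eqI:
  assumes "y - x \<in> HBplus \<epsilon> B"
  shows "qproj (HBplus \<epsilon> B) y = qproj (HBplus \<epsilon> B) x"
proof -
  have "z - y \<in> HBplus \<epsilon> B \<longleftrightarrow> z - x \<in> HBplus \<epsilon> B" for z
    using HBplus_add[of "z - y" \<epsilon> B "y - x"] HBplus_diff[of "z - x" \<epsilon> B "y - x"] assms by auto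
  then show ?thesis by (auto simp: qproj_def)
qed

lemma qproj_some: "qproj (HBplus \<epsilon> B) (SOME y. y \<in> qproj (HBplus \<epsilon> B) x) = qproj (HBplus \<epsilon> B) x"
proof (rule qproj_eqI)
  show "(SOME y. y \<in> qproj (HBplus \<epsilon> B) x) - x \<in> HBplus \<epsilon> B"
    using someI[of "\<lambda>y. y \<in> qproj (HBplus \<epsilon> B) x", OF qproj_self] by (simp add: qproj_def)
qed

text \<open>The module operations of \<open>H/HB\<^sup>+\<close> in \<open>nullQ\<close> are written as unions over cosets.\<close>

lemma qproj_add:
  "(\<Union>u\<in>qproj (HBplus \<epsilon> B) x. \<Union>v\<in>qproj (HBplus \<epsilon> B) y. qproj (HBplus \<epsilon> B) (u + v))
     = qproj (HBplus \<epsilon> B) (x + y)" (is "?U = _")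
proof (rule equalityI)
  have "qproj (HBplus \<epsilon> B) (u + v) = qproj (HBplus \<epsilon> B) (x + y)"
    if "u \<in> qproj (HBplus \<epsilon> B) x" "v \<in> qproj (HBplus \<epsilon> B) y" for u v
  proof (rule qproj_eqI)
    have "(u - x) + (v - y) \<in> HBplus \<epsilon> B"
      using that by (intro HBplus_add) (simp_all add: qproj_def)
    then show "u + v - (x + y) \<in> HBplus \<epsilon> B"
      by (simp add: diff_add_eq add_diff_eq diff_diff_eq)
  qed
  then show "?U \<subseteq> qproj (HBplus \<epsilon> B) (x + y)"
    by (intro UN_least) simp
  show "qproj (HBplus \<epsilon> B) (x + y) \<subseteq> ?U"
    using qproj_self[of x \<epsilon> B] qproj_self[of y \<epsilon> B] by (intro SUP_upper2 order_refl) auto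
qed

lemma qproj_left_mult:
  "(\<Union>u\<in>qproj (HBplus \<epsilon> B) x. qproj (HBplus \<epsilon> B) (c * u)) = qproj (HBplus \<epsilon> B) (c * x)"
  (is "?U = _")
proof (rule equalityI)
  have "qproj (HBplus \<epsilon> B) (c * u) = qproj (HBplus \<epsilon> B) (c * x)"
    if "u \<in> qproj (HBplus \<epsilon> B) x" for u
    using that HBplus_left_mult[of "u - x" \<epsilon> B c]
    by (intro qproj_eqI) (simp add: qproj_def right_diff_distrib)
  then show "?U \<subseteq> qproj (HBplus \<epsilon> B) (c * x)"
    by (intro UN_least) simp
  show "qproj (HBplus \<epsilon> B) (c * x) \<subseteq> ?U"
    using qproj_self[of x \<epsilon> B] by (intro SUP_upper2 order_refl) auto
qed

lemma additive_subgroup_nullA: "additive_subgroup (nullA s t)"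
  by (simp add: nullA_def additive_subgroup_tnull)

lemma additive_subgroup_nullAo: "additive_subgroup (nullAo t)"
  by (simp add: nullAo_def additive_subgroup_tnull)

lemma additive_subgroup_nullB: "additive_subgroup (nullB B)"
  by (simp add: nullB_def additive_subgroup_tnull)

lemma additive_subgroup_nullQ: "additive_subgroup (nullQ s t N)"
  by (simp add: nullQ_def additive_subgroup_tnull)

lemmas cong_mod_trans_null [trans] =
  cong_mod_trans[OF additive_subgroup_nullA] cong_mod_trans[OF additive_subgroup_nullAo]
  cong_mod_trans[OF additive_subgroup_nullB] cong_mod_trans[OF additive_subgroup_nullQ]

lemma nullA_addl: "frag_of (m + m', n) - frag_of (m, n) - frag_of (m', n) \<in> nullA s t"
  unfolding nullA_def by (rule tnull.addl) auto

lemma nullA_addr: "frag_of (m, n + n') - frag_of (m, n) - frag_of (m, n') \<in> nullA s t"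
  unfolding nullA_def by (rule tnull.addr) auto

lemma nullA_bal: "frag_of (t a * m, n) - frag_of (m, s a * n) \<in> nullA s t"
  unfolding nullA_def
  using tnull.bal[where M=UNIV and R=UNIV and N=UNIV and m=m and r=a and n=n and addM="(+)"
      and addN="(+)" and ract="\<lambda>x a. t a * x" and lact="\<lambda>a y. s a * y"]
  by simp

lemma frag_extend_nullA:
  assumes "additive_subgroup T" and "z \<in> nullA s t"
    and "\<And>m m' n. F (m + m') n - F m n - F m' n \<in> T"
    and "\<And>m n n'. F m (n + n') - F m n - F m n' \<in> T"
    and "\<And>a m n. F (t a * m) n - F m (s a * n) \<in> T"
  shows "frag_extend (case_prod F) z \<in> T"
  using assms(2) unfolding nullA_def
  by (rule frag_extend_tnull[OF assms(1)]) (use assms(3-5) in auto)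

lemma nullB_bal: "r \<in> B \<Longrightarrow> frag_of (m * r, n) - frag_of (m, r * n) \<in> nullB B"
  unfolding nullB_def by (rule tnull.bal) auto

lemma nullAo_subset_nullB:
  assumes "\<And>a. t a \<in> B"
  shows "nullAo t \<subseteq> nullB B"
proof
  fix z assume "z \<in> nullAo t"
  then have "frag_extend (\<lambda>(x, y). frag_of (x, y)) z \<in> nullB B"
    unfolding nullAo_def
    by (rule frag_extend_tnull[OF additive_subgroup_nullB])
      (auto simp: nullB_def intro: tnull.addl tnull.addr tnull.bal assms)
  also have "frag_extend (\<lambda>(x, y). frag_of (x, y)) z = frag_extend frag_of z"
    by (rule frag_extend_eq) auto
  finally show "z \<in> nullB B"
    by (simp flip: frag_expansion)
qed

definition mult_snd :: "'h::ring_1 \<Rightarrow> ('c \<times> 'h \<Rightarrow>\<^sub>0 int) \<Rightarrow> ('c \<times> 'h \<Rightarrow>\<^sub>0 int)" where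
  "mult_snd y X = frag_extend (\<lambda>(u, v). frag_of (u, v * y)) X"

lemma mult_snd_frag_of [simp]: "mult_snd y (frag_of (u, v)) = frag_of (u, v * y)"
  by (simp add: mult_snd_def)

lemma mult_snd_diff: "mult_snd y (X - Y) = mult_snd y X - mult_snd y Y"
  by (simp add: mult_snd_def frag_extend_diff)

lemma mult_snd_frag_extend: "mult_snd y (frag_extend g X) = frag_extend (\<lambda>p. mult_snd y (g p)) X"
  unfolding mult_snd_def by (rule frag_extend_frag_extend)

lemma mult_snd_mult_snd: "mult_snd y (mult_snd y' X) = mult_snd (y' * y) X"
  unfolding mult_snd_def frag_extend_frag_extend
  by (rule frag_extend_eq) (auto simp: mult.assoc)

lemma mult_snd_tnull:
  assumes "z \<in> tnull M addM UNIV (+) R ract (\<lambda>r n. f r * n)"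
  shows "mult_snd y z \<in> tnull M addM UNIV (+) R ract (\<lambda>r n. f r * n)"
  using assms unfolding mult_snd_def
  by (rule frag_extend_tnull[OF additive_subgroup_tnull])
    (auto simp: distrib_right mult.assoc intro: tnull.addl tnull.addr tnull.bal)

lemma mult_snd_add_right_tnull:
  assumes "Poly_Mapping.keys X \<subseteq> M \<times> UNIV"
  shows "mult_snd (y + y') X - mult_snd y X - mult_snd y' X \<in> tnull M addM UNIV (+) R ract lact"
proof -
  have "frag_extend (\<lambda>p. mult_snd (y + y') (frag_of p) - mult_snd y (frag_of p)
     - mult_snd y' (frag_of p)) X \<in> tnull M addM UNIV (+) R ract lact"
    using assms
    by (intro frag_extend_in_additive_subgroup[OF additive_subgroup_tnull])
      (auto simp: distrib_left intro!: tnull.addr)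
  then show ?thesis
    by (simp add: frag_extend_fun_diff flip: mult_snd_frag_extend frag_expansion)
qed

lemma mult_snd_nullA: "z \<in> nullA s t \<Longrightarrow> mult_snd y z \<in> nullA s t"
  unfolding nullA_def by (rule mult_snd_tnull)

lemma mult_snd_nullB: "z \<in> nullB B \<Longrightarrow> mult_snd y z \<in> nullB B"
  unfolding nullB_def by (rule mult_snd_tnull)

lemma mult_snd_nullQ: "z \<in> nullQ s t N \<Longrightarrow> mult_snd y z \<in> nullQ s t N"
  unfolding nullQ_def by (rule mult_snd_tnull)

definition tensor_mult ::
  "('h::ring_1 \<times> 'h \<Rightarrow>\<^sub>0 int) \<Rightarrow> ('h \<times> 'h \<Rightarrow>\<^sub>0 int) \<Rightarrow> ('h \<times> 'h \<Rightarrow>\<^sub>0 int)" where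
  "tensor_mult X Y =
     frag_extend (\<lambda>(x1, x2). frag_extend (\<lambda>(y1, y2). frag_of (x1 * y1, x2 * y2)) Y) X"

lemma tensor_mult_frag_of_right:
  "tensor_mult X (frag_of (u, v)) = frag_extend (\<lambda>(x1, x2). frag_of (x1 * u, x2 * v)) X"
  unfolding tensor_mult_def by (rule frag_extend_eq) auto

lemma tensor_mult_frag_extend_right:
  "tensor_mult X (frag_extend g Y) = frag_extend (\<lambda>p. tensor_mult X (g p)) Y"
  using subset_UNIV
  by (induction Y rule: frag_induction)
    (auto simp: tensor_mult_def frag_extend_diff frag_extend_fun_diff frag_extend_eq_0 split_def)

lemma tensor_mult_diff_left: "tensor_mult (X - X') Y = tensor_mult X Y - tensor_mult X' Y"
  by (simp add: tensor_mult_def frag_extend_diff)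

lemma tensor_mult_diff_right: "tensor_mult X (Y - Y') = tensor_mult X Y - tensor_mult X Y'"
  by (simp add: tensor_mult_def frag_extend_diff frag_extend_fun_diff split_def)

lemma mult_snd_tensor_mult: "mult_snd y (tensor_mult X Y) = tensor_mult X (mult_snd y Y)"
  unfolding tensor_mult_def mult_snd_frag_extend
  by (rule frag_extend_eq) (auto simp: mult_snd_def frag_extend_frag_extend mult.assoc split_def)

lemma mult_snd_eq_tensor_mult: "mult_snd y X = tensor_mult X (frag_of (1, y))"
  by (simp add: tensor_mult_frag_of_right mult_snd_def)

lemma tensor_mult_nullA:
  assumes "z \<in> nullA s t"
  shows "tensor_mult z Y \<in> nullA s t"
proof -
  have "tensor_mult z (frag_of (u, v)) \<in> nullA s t" for u v
    unfolding tensor_mult_frag_of_right using additive_subgroup_nullA assms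
    by (rule frag_extend_nullA)
      (auto simp: distrib_right mult.assoc nullA_addl nullA_addr nullA_bal)
  then show ?thesis
    by (subst frag_expansion[of Y])
      (auto simp: tensor_mult_frag_extend_right
        intro: frag_extend_in_additive_subgroup[OF additive_subgroup_nullA])
qed

definition proj_fst :: "'h::ring_1 set \<Rightarrow> ('h \<times> 'h \<Rightarrow>\<^sub>0 int) \<Rightarrow> ('h set \<times> 'h \<Rightarrow>\<^sub>0 int)" where
  "proj_fst N X = frag_extend (\<lambda>(u, v). frag_of (qproj N u, v)) X"

lemma proj_fst_frag_of [simp]: "proj_fst N (frag_of (u, v)) = frag_of (qproj N u, v)"
  by (simp add: proj_fst_def)

lemma proj_fst_diff: "proj_fst N (X - Y) = proj_fst N X - proj_fst N Y"
  by (simp add: proj_fst_def frag_extend_diff)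

lemma proj_fst_frag_extend: "proj_fst N (frag_extend g X) = frag_extend (\<lambda>p. proj_fst N (g p)) X"
  unfolding proj_fst_def by (rule frag_extend_frag_extend)

lemma proj_fst_mult_snd: "proj_fst N (mult_snd y X) = mult_snd y (proj_fst N X)"
  unfolding proj_fst_def mult_snd_def frag_extend_frag_extend
  by (rule frag_extend_eq) auto

lemma proj_fst_nullQ:
  fixes s t :: "'a \<Rightarrow> 'h::ring_1"
  assumes "z \<in> nullA s t"
  shows "proj_fst (HBplus \<epsilon> B) z \<in> nullQ s t (HBplus \<epsilon> B)"
  using additive_subgroup_nullQ assms unfolding proj_fst_def
proof (rule frag_extend_nullA)
  let ?\<pi> = "qproj (HBplus \<epsilon> B)" and ?T = "nullQ s t (HBplus \<epsilon> B)"
  fix m m' n n' :: 'h and a :: 'a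
  have "frag_of (\<Union>x\<in>?\<pi> m. \<Union>y\<in>?\<pi> m'. ?\<pi> (x + y), n) - frag_of (?\<pi> m, n) - frag_of (?\<pi> m', n) \<in> ?T"
    unfolding nullQ_def by (rule tnull.addl) auto
  then show "frag_of (?\<pi> (m + m'), n) - frag_of (?\<pi> m, n) - frag_of (?\<pi> m', n) \<in> ?T"
    by (simp only: qproj_add)
  show "frag_of (?\<pi> m, n + n') - frag_of (?\<pi> m, n) - frag_of (?\<pi> m, n') \<in> ?T"
    unfolding nullQ_def by (rule tnull.addr) auto
  have "frag_of (\<Union>x\<in>?\<pi> m. ?\<pi> (t a * x), n) - frag_of (?\<pi> m, s a * n) \<in> ?T"
    unfolding nullQ_def
    using tnull.bal[where ract="\<lambda>C a. \<Union>x\<in>C. ?\<pi> (t a * x)" and lact="\<lambda>a y. s a * y"] by simp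
  then show "frag_of (?\<pi> (t a * m), n) - frag_of (?\<pi> m, s a * n) \<in> ?T"
    by (simp only: qproj_left_mult)
qed

lemma proj_fst_cong:
  "cong_mod (nullA s t) X Y \<Longrightarrow>
   cong_mod (nullQ s t (HBplus \<epsilon> B)) (proj_fst (HBplus \<epsilon> B) X) (proj_fst (HBplus \<epsilon> B) Y)"
  unfolding cong_mod_def proj_fst_diff[symmetric] by (rule proj_fst_nullQ)

lemma proj_fst_tensor_mult_cong:
  assumes "\<And>c d. (c, d) \<in> Poly_Mapping.keys Y \<Longrightarrow> c - f c \<in> HBplus \<epsilon> B"
  shows "proj_fst (HBplus \<epsilon> B) (tensor_mult X Y)
       = proj_fst (HBplus \<epsilon> B) (tensor_mult X (frag_extend (\<lambda>(c, d). frag_of (f c, d)) Y))"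
proof -
  have "proj_fst (HBplus \<epsilon> B) (tensor_mult X (frag_of (c, d)))
      = proj_fst (HBplus \<epsilon> B) (tensor_mult X (frag_of (f c, d)))"
    if "(c, d) \<in> Poly_Mapping.keys Y" for c d
  proof -
    have "qproj (HBplus \<epsilon> B) (x1 * c) = qproj (HBplus \<epsilon> B) (x1 * f c)" for x1
      using HBplus_left_mult[OF assms[OF that], of x1]
      by (intro qproj_eqI) (simp add: right_diff_distrib)
    then show ?thesis
      unfolding tensor_mult_frag_of_right proj_fst_frag_extend
      by (intro frag_extend_eq) auto
  qed
  then show ?thesis
    by (subst (1) frag_expansion[of Y])
      (auto simp: tensor_mult_frag_extend_right proj_fst_frag_extend intro: frag_extend_eq)
qed

definition lift_rep :: "('h set \<times> 'h \<Rightarrow>\<^sub>0 int) \<Rightarrow> ('h \<times> 'h \<Rightarrow>\<^sub>0 int)" where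
  "lift_rep w = frag_extend (\<lambda>(C, y). frag_of (SOME x. x \<in> C, y)) w"

lemma proj_fst_lift_rep:
  assumes "Poly_Mapping.keys w \<subseteq> range (qproj (HBplus \<epsilon> B)) \<times> UNIV"
  shows "proj_fst (HBplus \<epsilon> B) (lift_rep w) = w"
proof -
  have "proj_fst (HBplus \<epsilon> B) (lift_rep w) = frag_extend frag_of w"
    unfolding lift_rep_def proj_fst_frag_extend
    by (rule frag_extend_eq) (use assms in \<open>auto simp: proj_fst_def qproj_some\<close>)
  then show ?thesis
    by (simp flip: frag_expansion)
qed

lemma beta_eq: "beta \<Delta> z = frag_extend (\<lambda>(x, y). mult_snd y (\<Delta> x)) z"
  unfolding beta_def mult_snd_def by (rule frag_extend_eq) (auto simp: split_def)

lemma beta_frag_of [simp]: "beta \<Delta> (frag_of (x, y)) = mult_snd y (\<Delta> x)"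
  by (simp add: beta_eq)

lemma beta_add: "beta \<Delta> (z + z') = beta \<Delta> z + beta \<Delta> z'"
  by (simp add: beta_def frag_extend_add)

lemma beta_diff: "beta \<Delta> (z - z') = beta \<Delta> z - beta \<Delta> z'"
  by (simp add: beta_def frag_extend_diff)

lemma beta_frag_extend: "beta \<Delta> (frag_extend g z) = frag_extend (\<lambda>p. beta \<Delta> (g p)) z"
  unfolding beta_def by (rule frag_extend_frag_extend)

lemma beta_mult_snd: "beta \<Delta> (mult_snd y z) = mult_snd y (beta \<Delta> z)"
  unfolding mult_snd_def[of y z] beta_frag_extend
  by (simp add: beta_eq mult_snd_frag_extend mult_snd_mult_snd split_def)

lemma canmap_eq: "canmap \<Delta> N z = proj_fst N (beta \<Delta> z)"
  unfolding canmap_def beta_eq proj_fst_frag_extend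
  by (rule frag_extend_eq) (auto simp: proj_fst_def mult_snd_def frag_extend_frag_extend split_def)

lemma canmap_frag_of: "canmap \<Delta> N (frag_of (x, y)) = mult_snd y (proj_fst N (\<Delta> x))"
  by (simp add: canmap_eq proj_fst_mult_snd)

lemma fsum_mult_snd: "fsum (\<lambda>(x, y). f x * y) (mult_snd d X) = fsum (\<lambda>(x, y). f x * y) X * d"
  unfolding mult_snd_def fsum_frag_extend
  by (simp add: split_def mult.assoc flip: fsum_mult_right)

definition tensor_mult_op ::
  "('h::ring_1 \<times> 'h \<Rightarrow>\<^sub>0 int) \<Rightarrow> ('h \<times> 'h \<Rightarrow>\<^sub>0 int) \<Rightarrow> ('h \<times> 'h \<Rightarrow>\<^sub>0 int)" where
  "tensor_mult_op Z W = frag_extend (\<lambda>(p, q). frag_extend (\<lambda>(c, d). frag_of (p * c, d * q)) W) Z"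

lemma tensor_mult_op_eq:
  "tensor_mult_op Z W
   = frag_extend (\<lambda>(p, q). mult_snd q (frag_extend (\<lambda>(c, d). frag_of (p * c, d)) W)) Z"
  unfolding tensor_mult_op_def mult_snd_frag_extend by (simp add: split_def)

lemma tensor_mult_op_nullB:
  assumes keys: "Poly_Mapping.keys w \<subseteq> B \<times> UNIV" and sum: "fsum (\<lambda>(c, d). c * d) w = 0"
  shows "tensor_mult_op z w \<in> nullB B"
proof -
  have "frag_extend (\<lambda>(c, d). frag_of (p * c, d * q)) w \<in> nullB B" for p q
  proof -
    have "cong_mod (nullB B) (frag_extend (\<lambda>(c, d). frag_of (p * c, d * q)) w)
        (frag_extend (\<lambda>x. frag_of (p, (\<lambda>(c, d). c * (d * q)) x)) w)"
      using keys
      by (intro frag_extend_cong_mod additive_subgroup_nullB) (auto simp: cong_mod_def nullB_bal)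
    also have "cong_mod (nullB B) \<dots> (frag_of (p, fsum (\<lambda>(c, d). c * (d * q)) w))"
      unfolding nullB_def by (rule tnull_frag_of_fsum) simp
    also have "fsum (\<lambda>(c, d). c * (d * q)) w = fsum (\<lambda>(c, d). c * d) w * q"
      by (simp add: split_def mult.assoc flip: fsum_mult_right)
    also have "\<dots> = 0"
      by (simp add: sum)
    also have "cong_mod (nullB B) (frag_of (p, 0)) 0"
      unfolding nullB_def by (simp add: tnull_frag_of_zero)
    finally show ?thesis
      by simp
  qed
  then show ?thesis
    unfolding tensor_mult_op_def
    by (intro frag_extend_in_additive_subgroup additive_subgroup_nullB) auto
qed

locale bialgebroid =
  fixes s t :: "'a::ring_1 \<Rightarrow> 'h::ring_1" and \<Delta> :: "'h \<Rightarrow> ('h \<times> 'h \<Rightarrow>\<^sub>0 int)"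
    and \<epsilon> :: "'h \<Rightarrow> 'a"
  assumes s_add: "s (a + b) = s a + s b" and s_mult: "s (a * b) = s a * s b" and s_one: "s 1 = 1"
    and counit_add: "\<epsilon> (x + y) = \<epsilon> x + \<epsilon> y"
    and counit_st: "\<epsilon> (s a * t b * h) = a * \<epsilon> h * b"
    and counit_one: "\<epsilon> 1 = 1"
    and Delta_add: "\<Delta> (x + y) - \<Delta> x - \<Delta> y \<in> nullA s t"
    and counit_left: "fsum (\<lambda>(x, y). s (\<epsilon> x) * y) (\<Delta> h) = h"
    and Delta_takeuchi: "frag_extend (\<lambda>(x, y). frag_of (x * t a, y)) (\<Delta> h)
          - frag_extend (\<lambda>(x, y). frag_of (x, y * s a)) (\<Delta> h) \<in> nullA s t"
    and Delta_mult: "\<Delta> (x * y) - tensor_mult (\<Delta> x) (\<Delta> y) \<in> nullA s t"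
begin

abbreviation cong_A (infix \<open>\<equiv>\<^sub>A\<close> 50) where "cong_A \<equiv> cong_mod (nullA s t)"
abbreviation cong_Ao (infix \<open>\<equiv>\<^sub>A\<^sub>o\<close> 50) where "cong_Ao \<equiv> cong_mod (nullAo t)"

lemma mult_snd_cong_A: "X \<equiv>\<^sub>A Y \<Longrightarrow> mult_snd y X \<equiv>\<^sub>A mult_snd y Y"
  unfolding cong_mod_def by (simp add: mult_snd_nullA flip: mult_snd_diff)

lemma tensor_mult_cong_A: "X \<equiv>\<^sub>A X' \<Longrightarrow> tensor_mult X Y \<equiv>\<^sub>A tensor_mult X' Y"
  unfolding cong_mod_def by (simp add: tensor_mult_nullA flip: tensor_mult_diff_left)

lemma counit_t: "\<epsilon> (t a) = a"
  using counit_st[of 1 a 1] by (simp add: s_one counit_one)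

lemma counit_diff: "\<epsilon> (x - y) = \<epsilon> x - \<epsilon> y"
  using counit_add[of "x - y" y] by simp

lemma fsum_counit_nullA: "z \<in> nullA s t \<Longrightarrow> fsum (\<lambda>(x, y). s (\<epsilon> x) * y) z = 0"
  unfolding nullA_def
proof (induction rule: tnull.induct)
  case (bal m a n)
  have "\<epsilon> (t a * m) = \<epsilon> m * a"
    using counit_st[of 1 a m] by (simp add: s_one)
  then show ?case by (simp add: fsum_diff s_mult mult.assoc)
qed (simp_all add: fsum_add fsum_diff fsum_uminus counit_add s_add distrib_left distrib_right)

text \<open>This is where the Takeuchi property of \<open>\<Delta>\<close> enters.\<close>

lemma tensor_mult_Delta_nullA:
  assumes "z \<in> nullA s t"
  shows "tensor_mult (\<Delta> x) z \<in> nullA s t"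
proof -
  have scale: "tensor_mult (\<Delta> x) (frag_of (a * m, b * n))
      = tensor_mult (tensor_mult (\<Delta> x) (frag_of (a, b))) (frag_of (m, n))" for a b m n
    unfolding tensor_mult_frag_of_right frag_extend_frag_extend
    by (rule frag_extend_eq) (auto simp: mult.assoc)
  have "frag_extend (\<lambda>(m, n). tensor_mult (\<Delta> x) (frag_of (m, n))) z \<in> nullA s t"
    using additive_subgroup_nullA assms
  proof (rule frag_extend_nullA)
    fix m m' n n' a
    show "tensor_mult (\<Delta> x) (frag_of (m + m', n)) - tensor_mult (\<Delta> x) (frag_of (m, n))
        - tensor_mult (\<Delta> x) (frag_of (m', n)) \<in> nullA s t"
      "tensor_mult (\<Delta> x) (frag_of (m, n + n')) - tensor_mult (\<Delta> x) (frag_of (m, n))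
        - tensor_mult (\<Delta> x) (frag_of (m, n')) \<in> nullA s t"
      unfolding tensor_mult_frag_of_right frag_extend_fun_diff[symmetric]
      by (auto simp: split_def distrib_left nullA_addl nullA_addr
          intro!: frag_extend_in_additive_subgroup[OF additive_subgroup_nullA])
    have "tensor_mult (tensor_mult (\<Delta> x) (frag_of (t a, 1)) - tensor_mult (\<Delta> x) (frag_of (1, s a)))
        (frag_of (m, n)) \<in> nullA s t"
      using Delta_takeuchi[of a x]
      by (intro tensor_mult_nullA) (simp add: tensor_mult_frag_of_right)
    then show "tensor_mult (\<Delta> x) (frag_of (t a * m, n)) - tensor_mult (\<Delta> x) (frag_of (m, s a * n))
        \<in> nullA s t"
      using scale[of "t a" m 1 n] scale[of 1 m "s a" n] by (simp add: tensor_mult_diff_left)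
  qed
  then show ?thesis
    by (subst frag_expansion) (simp add: tensor_mult_frag_extend_right split_def)
qed

lemma tensor_mult_Delta_cong: "Y \<equiv>\<^sub>A Y' \<Longrightarrow> tensor_mult (\<Delta> x) Y \<equiv>\<^sub>A tensor_mult (\<Delta> x) Y'"
  unfolding cong_mod_def using tensor_mult_Delta_nullA[of "Y - Y'" x]
  by (simp add: tensor_mult_diff_right)

lemma beta_left_mult:
  "beta \<Delta> (frag_extend (\<lambda>(c, d). frag_of (p * c, d)) w) \<equiv>\<^sub>A tensor_mult (\<Delta> p) (beta \<Delta> w)"
proof -
  have "beta \<Delta> (frag_extend (\<lambda>(c, d). frag_of (p * c, d)) w)
      = frag_extend (\<lambda>(c, d). mult_snd d (\<Delta> (p * c))) w"
    by (simp add: beta_frag_extend split_def)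
  also have "\<dots> \<equiv>\<^sub>A frag_extend (\<lambda>(c, d). mult_snd d (tensor_mult (\<Delta> p) (\<Delta> c))) w"
    using Delta_mult
    by (intro frag_extend_cong_mod additive_subgroup_nullA)
      (clarify, intro mult_snd_cong_A, simp add: cong_mod_def)
  also have "\<dots> = tensor_mult (\<Delta> p) (beta \<Delta> w)"
    by (simp add: beta_eq tensor_mult_frag_extend_right mult_snd_tensor_mult split_def)
  finally show ?thesis .
qed

lemma beta_tensor_mult_op:
  assumes "beta \<Delta> w \<equiv>\<^sub>A frag_of (b, 1)"
  shows "beta \<Delta> (tensor_mult_op z w) \<equiv>\<^sub>A tensor_mult (beta \<Delta> z) (frag_of (b, 1))"
proof -
  let ?pw = "\<lambda>p. frag_extend (\<lambda>(c, d). frag_of (p * c, d)) w"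
  have "beta \<Delta> (tensor_mult_op z w) = frag_extend (\<lambda>(p, q). mult_snd q (beta \<Delta> (?pw p))) z"
    by (simp add: tensor_mult_op_eq beta_frag_extend beta_mult_snd split_def)
  also have "\<dots> \<equiv>\<^sub>A frag_extend (\<lambda>(p, q). mult_snd q (tensor_mult (\<Delta> p) (beta \<Delta> w))) z"
    by (intro frag_extend_cong_mod additive_subgroup_nullA)
      (clarify, intro mult_snd_cong_A beta_left_mult)
  also have "\<dots> \<equiv>\<^sub>A frag_extend (\<lambda>(p, q). mult_snd q (tensor_mult (\<Delta> p) (frag_of (b, 1)))) z"
    by (intro frag_extend_cong_mod additive_subgroup_nullA)
      (clarify, intro mult_snd_cong_A tensor_mult_Delta_cong assms)
  also have "\<dots> = tensor_mult (beta \<Delta> z) (frag_of (b, 1))"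
    unfolding beta_eq tensor_mult_frag_of_right frag_extend_frag_extend
    by (rule frag_extend_eq) (auto simp: mult_snd_def frag_extend_frag_extend split_def)
  finally show ?thesis .
qed

lemma fsum_mult_of_beta:
  assumes "beta \<Delta> w \<equiv>\<^sub>A frag_of (b, 1)"
  shows "fsum (\<lambda>(c, d). c * d) w = s (\<epsilon> b)"
proof -
  let ?F = "\<lambda>(x, y). s (\<epsilon> x) * y"
  have "(\<lambda>(c, d). fsum ?F (mult_snd d (\<Delta> c))) = (\<lambda>(c, d). c * d)"
    by (auto simp: fun_eq_iff fsum_mult_snd counit_left)
  then have "fsum ?F (beta \<Delta> w) = fsum (\<lambda>(c, d). c * d) w"
    by (simp add: beta_eq fsum_frag_extend prod.case_distrib)
  moreover have "fsum ?F (beta \<Delta> w) = fsum ?F (frag_of (b, 1))"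
    using fsum_counit_nullA[of "beta \<Delta> w - frag_of (b, 1)"] assms
    by (simp add: cong_mod_def fsum_diff)
  ultimately show ?thesis
    by simp
qed

end

section \<open>Well-definedness of the canonical map\<close>

locale bialgebroid_subring = bialgebroid s t \<Delta> \<epsilon>
  for s t :: "'a::ring_1 \<Rightarrow> 'h::ring_1" and \<Delta> :: "'h \<Rightarrow> ('h \<times> 'h \<Rightarrow>\<^sub>0 int)" and \<epsilon> :: "'h \<Rightarrow> 'a" +
  fixes B :: "'h set" and \<delta> :: "'h \<Rightarrow> ('h \<times> 'h \<Rightarrow>\<^sub>0 int)"
  assumes B_add: "x \<in> B \<Longrightarrow> y \<in> B \<Longrightarrow> x + y \<in> B" and B_uminus: "x \<in> B \<Longrightarrow> - x \<in> B"
    and t_in_B: "t a \<in> B"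
    and coaction_keys: "b \<in> B \<Longrightarrow> Poly_Mapping.keys (\<delta> b) \<subseteq> B \<times> UNIV"
    and coaction_Delta: "b \<in> B \<Longrightarrow> \<delta> b - \<Delta> b \<in> nullA s t"
begin

abbreviation HB :: "'h set" where "HB \<equiv> HBplus \<epsilon> B"
abbreviation cong_B (infix \<open>\<equiv>\<^sub>B\<close> 50) where "cong_B \<equiv> cong_mod (nullB B)"
abbreviation cong_Q (infix \<open>\<equiv>\<^sub>Q\<close> 50) where "cong_Q \<equiv> cong_mod (nullQ s t HB)"

lemma mult_snd_cong_Q: "X \<equiv>\<^sub>Q Y \<Longrightarrow> mult_snd y X \<equiv>\<^sub>Q mult_snd y Y"
  unfolding cong_mod_def by (simp add: mult_snd_nullQ flip: mult_snd_diff)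

lemma B_diff: "x \<in> B \<Longrightarrow> y \<in> B \<Longrightarrow> x - y \<in> B"
  using B_add[of x "- y"] B_uminus[of y] by simp

lemma coaction_counit: "b \<in> B \<Longrightarrow> fsum (\<lambda>(c, d). s (\<epsilon> c) * d) (\<delta> b) = b"
  using fsum_counit_nullA[OF coaction_Delta] by (simp add: fsum_diff counit_left)

lemma counit_fst_coaction:
  assumes "b \<in> B"
  shows "frag_extend (\<lambda>(c, d). frag_of (t (\<epsilon> c), d)) (\<delta> b) \<equiv>\<^sub>A frag_of (1, b)"
proof -
  have "frag_extend (\<lambda>(c, d). frag_of (t (\<epsilon> c), d)) (\<delta> b)
      \<equiv>\<^sub>A frag_extend (\<lambda>x. frag_of (1, (\<lambda>(c, d). s (\<epsilon> c) * d) x)) (\<delta> b)"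
    using nullA_bal[where m=1]
    by (intro frag_extend_cong_mod additive_subgroup_nullA) (auto simp: cong_mod_def)
  also have "\<dots> \<equiv>\<^sub>A frag_of (1, fsum (\<lambda>(c, d). s (\<epsilon> c) * d) (\<delta> b))"
    unfolding nullA_def by (rule tnull_frag_of_fsum) simp
  finally show ?thesis
    using coaction_counit[OF assms] by simp
qed

lemma Delta_mult_coaction:
  assumes "b \<in> B"
  shows "\<Delta> (m * b) \<equiv>\<^sub>A tensor_mult (\<Delta> m) (\<delta> b)"
proof -
  have "\<Delta> (m * b) \<equiv>\<^sub>A tensor_mult (\<Delta> m) (\<Delta> b)"
    using Delta_mult by (simp add: cong_mod_def)
  also have "\<dots> \<equiv>\<^sub>A tensor_mult (\<Delta> m) (\<delta> b)"
    using coaction_Delta[OF assms] cong_mod_sym[OF additive_subgroup_nullA]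
    by (intro tensor_mult_Delta_cong) (simp add: cong_mod_def)
  finally show ?thesis .
qed

lemma canmap_balanced:
  assumes "b \<in> B"
  shows "canmap \<Delta> HB (frag_of (m * b, n)) \<equiv>\<^sub>Q canmap \<Delta> HB (frag_of (m, b * n))"
proof -
  let ?counit_fst = "frag_extend (\<lambda>(c, d). frag_of (t (\<epsilon> c), d)) (\<delta> b)"
  have "canmap \<Delta> HB (frag_of (m * b, n)) = mult_snd n (proj_fst HB (\<Delta> (m * b)))"
    by (rule canmap_frag_of)
  also have "\<dots> \<equiv>\<^sub>Q mult_snd n (proj_fst HB (tensor_mult (\<Delta> m) (\<delta> b)))"
    using Delta_mult_coaction[OF assms] by (intro mult_snd_cong_Q proj_fst_cong)
  also have "\<dots> = mult_snd n (proj_fst HB (tensor_mult (\<Delta> m) ?counit_fst))"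
  proof -
    have "c - t (\<epsilon> c) \<in> HB" if "(c, d) \<in> Poly_Mapping.keys (\<delta> b)" for c d
      using that coaction_keys[OF assms] HBplus_mult[of "c - t (\<epsilon> c)" B \<epsilon> 1]
      by (auto simp: B_diff t_in_B counit_diff counit_t)
    then show ?thesis
      using proj_fst_tensor_mult_cong[of "\<delta> b" "\<lambda>c. t (\<epsilon> c)" \<epsilon> B] by simp
  qed
  also have "\<dots> \<equiv>\<^sub>Q mult_snd n (proj_fst HB (tensor_mult (\<Delta> m) (frag_of (1, b))))"
    using counit_fst_coaction[OF assms]
    by (intro mult_snd_cong_Q proj_fst_cong tensor_mult_Delta_cong)
  also have "\<dots> = canmap \<Delta> HB (frag_of (m, b * n))"
    by (simp add: canmap_frag_of proj_fst_mult_snd mult_snd_mult_snd flip: mult_snd_eq_tensor_mult)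
  finally show ?thesis .
qed

lemma canmap_nullB:
  assumes "z \<in> nullB B"
  shows "canmap \<Delta> HB z \<in> nullQ s t HB"
proof -
  have "canmap \<Delta> HB z = frag_extend (\<lambda>(x, y). canmap \<Delta> HB (frag_of (x, y))) z"
    unfolding canmap_def by simp
  also have "\<dots> \<in> nullQ s t HB"
    using assms unfolding nullB_def
  proof (rule frag_extend_tnull[OF additive_subgroup_nullQ])
    fix m m' n n' r
    have "proj_fst HB (mult_snd n (\<Delta> (m + m') - \<Delta> m - \<Delta> m')) \<in> nullQ s t HB"
      by (intro proj_fst_nullQ mult_snd_nullA Delta_add)
    then show "canmap \<Delta> HB (frag_of (m + m', n)) - canmap \<Delta> HB (frag_of (m, n))
        - canmap \<Delta> HB (frag_of (m', n)) \<in> nullQ s t HB"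
      by (simp add: canmap_frag_of proj_fst_diff mult_snd_diff proj_fst_mult_snd)
    have "proj_fst HB (mult_snd (n + n') (\<Delta> m) - mult_snd n (\<Delta> m) - mult_snd n' (\<Delta> m))
        \<in> nullQ s t HB"
      by (intro proj_fst_nullQ) (simp add: nullA_def mult_snd_add_right_tnull)
    then show "canmap \<Delta> HB (frag_of (m, n + n')) - canmap \<Delta> HB (frag_of (m, n))
        - canmap \<Delta> HB (frag_of (m, n')) \<in> nullQ s t HB"
      by (simp add: canmap_frag_of proj_fst_diff proj_fst_mult_snd)
    show "r \<in> B \<Longrightarrow> canmap \<Delta> HB (frag_of (m * r, n)) - canmap \<Delta> HB (frag_of (m, r * n))
        \<in> nullQ s t HB"
      using canmap_balanced by (simp add: cong_mod_def)
  qed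
  finally show ?thesis .
qed

end

section \<open>The translation map of a left Hopf algebroid\<close>

locale hopf_algebroid = bialgebroid s t \<Delta> \<epsilon>
  for s t :: "'a::ring_1 \<Rightarrow> 'h::ring_1" and \<Delta> :: "'h \<Rightarrow> ('h \<times> 'h \<Rightarrow>\<^sub>0 int)" and \<epsilon> :: "'h \<Rightarrow> 'a" +
  assumes beta_inj: "beta \<Delta> z \<in> nullA s t \<Longrightarrow> z \<in> nullAo t"
    and beta_surj: "\<exists>z. beta \<Delta> z - w \<in> nullA s t"
begin

lemma beta_cancel: "beta \<Delta> z \<equiv>\<^sub>A beta \<Delta> z' \<Longrightarrow> z \<equiv>\<^sub>A\<^sub>o z'"
  unfolding cong_mod_def by (rule beta_inj) (simp add: beta_diff)

definition translation :: "'h \<Rightarrow> ('h \<times> 'h \<Rightarrow>\<^sub>0 int)" where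
  "translation x = (SOME z. beta \<Delta> z \<equiv>\<^sub>A frag_of (x, 1))"

lemma beta_translation: "beta \<Delta> (translation x) \<equiv>\<^sub>A frag_of (x, 1)"
  unfolding translation_def cong_mod_def using beta_surj by (rule someI_ex)

definition beta_inv :: "('h \<times> 'h \<Rightarrow>\<^sub>0 int) \<Rightarrow> ('h \<times> 'h \<Rightarrow>\<^sub>0 int)" where
  "beta_inv X = frag_extend (\<lambda>(u, v). mult_snd v (translation u)) X"

lemma beta_beta_inv: "beta \<Delta> (beta_inv X) \<equiv>\<^sub>A X"
proof -
  have "beta \<Delta> (beta_inv X) = frag_extend (\<lambda>(u, v). mult_snd v (beta \<Delta> (translation u))) X"
    unfolding beta_inv_def beta_frag_extend by (simp add: beta_mult_snd split_def)
  also have "\<dots> \<equiv>\<^sub>A frag_extend (\<lambda>(u, v). mult_snd v (frag_of (u, 1))) X"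
    by (intro frag_extend_cong_mod additive_subgroup_nullA)
      (clarify, intro mult_snd_cong_A beta_translation)
  also have "\<dots> = X"
    by (subst (2) frag_expansion) (rule frag_extend_eq, auto)
  finally show ?thesis .
qed

lemma beta_inv_beta: "beta_inv (beta \<Delta> z) \<equiv>\<^sub>A\<^sub>o z"
  by (rule beta_cancel, rule beta_beta_inv)

lemma translation_add: "translation (x + y) \<equiv>\<^sub>A\<^sub>o translation x + translation y"
proof (rule beta_cancel)
  have "beta \<Delta> (translation (x + y)) \<equiv>\<^sub>A frag_of (x + y, 1)"
    by (rule beta_translation)
  also have "\<dots> \<equiv>\<^sub>A frag_of (x, 1) + frag_of (y, 1)"
    using nullA_addl by (simp add: cong_mod_def diff_diff_eq)
  also have "\<dots> \<equiv>\<^sub>A beta \<Delta> (translation x) + beta \<Delta> (translation y)"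
    by (intro cong_mod_add[OF additive_subgroup_nullA]
        cong_mod_sym[OF additive_subgroup_nullA beta_translation])
  finally show "beta \<Delta> (translation (x + y)) \<equiv>\<^sub>A beta \<Delta> (translation x + translation y)"
    by (simp add: beta_add)
qed

lemma translation_t_mult: "translation (t a * x) \<equiv>\<^sub>A\<^sub>o mult_snd (s a) (translation x)"
proof (rule beta_cancel)
  have "beta \<Delta> (translation (t a * x)) \<equiv>\<^sub>A frag_of (t a * x, 1)"
    by (rule beta_translation)
  also have "\<dots> \<equiv>\<^sub>A mult_snd (s a) (frag_of (x, 1))"
    using nullA_bal[where m=x and n=1] by (simp add: cong_mod_def)
  also have "\<dots> \<equiv>\<^sub>A mult_snd (s a) (beta \<Delta> (translation x))"
    by (intro mult_snd_cong_A cong_mod_sym[OF additive_subgroup_nullA beta_translation])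
  finally show "beta \<Delta> (translation (t a * x)) \<equiv>\<^sub>A beta \<Delta> (mult_snd (s a) (translation x))"
    by (simp add: beta_mult_snd)
qed

lemma translation_mult:
  assumes "beta \<Delta> w \<equiv>\<^sub>A frag_of (b, 1)"
  shows "translation (h * b) \<equiv>\<^sub>A\<^sub>o tensor_mult_op (translation h) w"
proof (rule beta_cancel)
  have "beta \<Delta> (translation (h * b)) \<equiv>\<^sub>A tensor_mult (frag_of (h, 1)) (frag_of (b, 1))"
    using beta_translation by (simp add: tensor_mult_frag_of_right)
  also have "\<dots> \<equiv>\<^sub>A tensor_mult (beta \<Delta> (translation h)) (frag_of (b, 1))"
    by (intro tensor_mult_cong_A cong_mod_sym[OF additive_subgroup_nullA beta_translation])
  also have "\<dots> \<equiv>\<^sub>A beta \<Delta> (tensor_mult_op (translation h) w)"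
    by (rule cong_mod_sym[OF additive_subgroup_nullA beta_tensor_mult_op[OF assms]])
  finally show "beta \<Delta> (translation (h * b)) \<equiv>\<^sub>A beta \<Delta> (tensor_mult_op (translation h) w)" .
qed

end

section \<open>Inverting the canonical map\<close>

locale galois_subring = hopf_algebroid s t \<Delta> \<epsilon> + bialgebroid_subring s t \<Delta> \<epsilon> B \<delta>
  for s t :: "'a::ring_1 \<Rightarrow> 'h::ring_1" and \<Delta> :: "'h \<Rightarrow> ('h \<times> 'h \<Rightarrow>\<^sub>0 int)" and \<epsilon> :: "'h \<Rightarrow> 'a"
    and B :: "'h set" and \<delta> :: "'h \<Rightarrow> ('h \<times> 'h \<Rightarrow>\<^sub>0 int)" +
  assumes galois: "b \<in> B \<Longrightarrow>
    \<exists>w. Poly_Mapping.keys w \<subseteq> B \<times> UNIV \<and> beta \<Delta> w - frag_of (b, 1) \<in> nullA s t"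
begin

lemma cong_Ao_imp_cong_B: "X \<equiv>\<^sub>A\<^sub>o Y \<Longrightarrow> X \<equiv>\<^sub>B Y"
  using nullAo_subset_nullB[of t B] t_in_B by (auto simp: cong_mod_def)

lemma mult_snd_cong_B: "X \<equiv>\<^sub>B Y \<Longrightarrow> mult_snd y X \<equiv>\<^sub>B mult_snd y Y"
  unfolding cong_mod_def by (simp add: mult_snd_nullB flip: mult_snd_diff)

lemma translation_mult_Bplus:
  assumes "b \<in> B" "\<epsilon> b = 0"
  shows "translation (h * b) \<in> nullB B"
proof -
  obtain w where keys: "Poly_Mapping.keys w \<subseteq> B \<times> UNIV" and w: "beta \<Delta> w \<equiv>\<^sub>A frag_of (b, 1)"
    using galois[OF assms(1)] by (auto simp: cong_mod_def)
  have "fsum (\<lambda>(c, d). c * d) w = 0"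
    using fsum_mult_of_beta[OF w] assms(2) s_add[of 0 0] by simp
  with keys have "tensor_mult_op (translation h) w \<in> nullB B"
    by (rule tensor_mult_op_nullB)
  moreover have "translation (h * b) \<equiv>\<^sub>B tensor_mult_op (translation h) w"
    by (rule cong_Ao_imp_cong_B, rule translation_mult[OF w])
  ultimately show ?thesis
    by (blast intro: cong_mod_mem[OF additive_subgroup_nullB])
qed

lemma translation_HBplus: "x \<in> HB \<Longrightarrow> translation x \<in> nullB B"
proof (induction x rule: HBplus_induct)
  case zero
  have "translation 0 \<equiv>\<^sub>B translation 0 + translation 0"
    using cong_Ao_imp_cong_B[OF translation_add[of 0 0]] by simp
  then show ?case
    using additive_subgroup_uminus[OF additive_subgroup_nullB, of "- translation 0"]
    by (simp add: cong_mod_def)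
next
  case (add_mult x h b)
  have "translation (x + h * b) \<equiv>\<^sub>B translation x + translation (h * b)"
    by (rule cong_Ao_imp_cong_B, rule translation_add)
  moreover have "translation x + translation (h * b) \<in> nullB B"
    using add_mult translation_mult_Bplus
    by (simp add: additive_subgroup_add[OF additive_subgroup_nullB])
  ultimately show ?case
    by (rule cong_mod_mem[OF additive_subgroup_nullB])
qed

lemma translation_cong:
  assumes "x - y \<in> HB"
  shows "translation x \<equiv>\<^sub>B translation y"
proof -
  have "translation x \<equiv>\<^sub>B translation (x - y) + translation y"
    using cong_Ao_imp_cong_B[OF translation_add[of "x - y" y]] by simp
  also have "\<dots> \<equiv>\<^sub>B 0 + translation y"
    using translation_HBplus[OF assms]
    by (intro cong_mod_add[OF additive_subgroup_nullB] cong_mod_refl[OF additive_subgroup_nullB])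
      simp
  finally show ?thesis
    by simp
qed

lemma translation_some: "translation (SOME y. y \<in> qproj HB x) \<equiv>\<^sub>B translation x"
  by (rule translation_cong, rule someI2[of "\<lambda>y. y \<in> qproj HB x", OF qproj_self])
    (simp add: qproj_def)

lemma beta_inv_lift_rep_nullQ:
  assumes "z \<in> nullQ s t HB"
  shows "beta_inv (lift_rep z) \<in> nullB B"
proof -
  let ?\<pi> = "qproj HB"
  define F where "F C y = mult_snd y (translation (SOME x. x \<in> C))" for C y
  have F: "F (?\<pi> x) y \<equiv>\<^sub>B mult_snd y (translation x)" for x y
    unfolding F_def by (rule mult_snd_cong_B, rule translation_some)
  have "beta_inv (lift_rep z) = frag_extend (case_prod F) z"
    unfolding beta_inv_def lift_rep_def frag_extend_frag_extend F_def by (simp add: split_def)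
  also have "\<dots> \<in> nullB B"
    using assms unfolding nullQ_def
  proof (rule frag_extend_tnull[OF additive_subgroup_nullB])
    fix m m' n n' a
    assume "m \<in> range ?\<pi>" "m' \<in> range ?\<pi>"
    then obtain x x' where m: "m = ?\<pi> x" "m' = ?\<pi> x'"
      by blast
    have "F (?\<pi> (x + x')) n - F (?\<pi> x) n - F (?\<pi> x') n
        \<equiv>\<^sub>B mult_snd n (translation (x + x') - translation x - translation x')"
      by (simp add: mult_snd_diff F cong_mod_diff[OF additive_subgroup_nullB])
    moreover have "mult_snd n (translation (x + x') - translation x - translation x') \<in> nullB B"
      using cong_Ao_imp_cong_B[OF translation_add[of x x']]
      by (intro mult_snd_nullB) (simp add: cong_mod_def diff_diff_eq)
    ultimately show "F (\<Union>u\<in>m. \<Union>v\<in>m'. ?\<pi> (u + v)) n - F m n - F m' n \<in> nullB B"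
      unfolding m qproj_add by (rule cong_mod_mem[OF additive_subgroup_nullB])
    show "F m (n + n') - F m n - F m n' \<in> nullB B"
      unfolding F_def nullB_def by (rule mult_snd_add_right_tnull) simp
    have "F (?\<pi> (t a * x)) n - F (?\<pi> x) (s a * n)
        \<equiv>\<^sub>B mult_snd n (translation (t a * x) - mult_snd (s a) (translation x))"
      by (simp add: mult_snd_diff mult_snd_mult_snd F cong_mod_diff[OF additive_subgroup_nullB])
    moreover have "mult_snd n (translation (t a * x) - mult_snd (s a) (translation x)) \<in> nullB B"
      using cong_Ao_imp_cong_B[OF translation_t_mult[of a x]]
      by (intro mult_snd_nullB) (simp add: cong_mod_def)
    ultimately show "F (\<Union>u\<in>m. ?\<pi> (t a * u)) n - F m (s a * n) \<in> nullB B"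
      unfolding m qproj_left_mult by (rule cong_mod_mem[OF additive_subgroup_nullB])
  qed
  finally show ?thesis .
qed

lemma beta_inv_lift_rep_proj_fst: "beta_inv (lift_rep (proj_fst HB X)) \<equiv>\<^sub>B beta_inv X"
proof -
  have "beta_inv (lift_rep (proj_fst HB X))
      = frag_extend (\<lambda>(u, v). mult_snd v (translation (SOME y. y \<in> qproj HB u))) X"
    unfolding beta_inv_def lift_rep_def proj_fst_def frag_extend_frag_extend
    by (rule frag_extend_eq) auto
  also have "\<dots> \<equiv>\<^sub>B beta_inv X"
    unfolding beta_inv_def
    by (intro frag_extend_cong_mod additive_subgroup_nullB)
      (clarify, intro mult_snd_cong_B translation_some)
  finally show ?thesis .
qed

theorem canmap_injective:
  assumes "canmap \<Delta> HB z \<in> nullQ s t HB"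
  shows "z \<in> nullB B"
proof -
  have "z \<equiv>\<^sub>B beta_inv (beta \<Delta> z)"
    by (rule cong_Ao_imp_cong_B, rule cong_mod_sym[OF additive_subgroup_nullAo beta_inv_beta])
  also have "\<dots> \<equiv>\<^sub>B beta_inv (lift_rep (canmap \<Delta> HB z))"
    unfolding canmap_eq
    by (rule cong_mod_sym[OF additive_subgroup_nullB beta_inv_lift_rep_proj_fst])
  finally show ?thesis
    using beta_inv_lift_rep_nullQ[OF assms] by (rule cong_mod_mem[OF additive_subgroup_nullB])
qed

theorem canmap_surjective:
  assumes "Poly_Mapping.keys w \<subseteq> range (qproj HB) \<times> UNIV"
  shows "canmap \<Delta> HB (beta_inv (lift_rep w)) \<equiv>\<^sub>Q w"
proof -
  have "proj_fst HB (beta \<Delta> (beta_inv (lift_rep w))) \<equiv>\<^sub>Q proj_fst HB (lift_rep w)"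
    by (rule proj_fst_cong, rule beta_beta_inv)
  then show ?thesis
    by (simp add: canmap_eq proj_fst_lift_rep[OF assms])
qed

end

lemma galois_subringI:
  assumes hopf: "left_hopf_algebroid \<eta>A \<eta>H s t \<Delta> \<epsilon>"
    and comod: "comodule_subring s t \<Delta> \<epsilon> B \<delta>"
    and galois: "\<forall>b\<in>B. \<exists>w. Poly_Mapping.keys w \<subseteq> B \<times> UNIV \<and> beta \<Delta> w - frag_of (b, 1) \<in> nullA s t"
  shows "galois_subring s t \<Delta> \<epsilon> B \<delta>"
proof unfold_locales
  show "\<And>b. b \<in> B \<Longrightarrow> \<exists>w. Poly_Mapping.keys w \<subseteq> B \<times> UNIV \<and> beta \<Delta> w - frag_of (b, 1) \<in> nullA s t"
    using galois by blast
qed (use hopf comod in \<open>auto simp: left_hopf_algebroid_def left_bialgebroid_def comodule_subring_def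
  tensor_mult_def\<close>)

theorem lemma2p12:
  fixes \<eta>A :: "'k::field \<Rightarrow> 'a::ring_1" and \<eta>H :: "'k \<Rightarrow> 'h::ring_1"
    and s t :: "'a \<Rightarrow> 'h" and \<Delta> :: "'h \<Rightarrow> ('h \<times> 'h \<Rightarrow>\<^sub>0 int)" and \<epsilon> :: "'h \<Rightarrow> 'a"
    and B :: "'h set" and \<delta> :: "'h \<Rightarrow> ('h \<times> 'h \<Rightarrow>\<^sub>0 int)"
  assumes hopf: "left_hopf_algebroid \<eta>A \<eta>H s t \<Delta> \<epsilon>"
    and flat: "s_flat s"
    and comod: "comodule_subring s t \<Delta> \<epsilon> B \<delta>"
    and galois: "\<forall>b\<in>B. \<exists>w. Poly_Mapping.keys w \<subseteq> B \<times> UNIV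
                        \<and> beta \<Delta> w - frag_of (b, 1) \<in> nullA s t"
  shows "(\<forall>z \<in> nullB B. canmap \<Delta> (HBplus \<epsilon> B) z \<in> nullQ s t (HBplus \<epsilon> B))
       \<and> (\<forall>z. canmap \<Delta> (HBplus \<epsilon> B) z \<in> nullQ s t (HBplus \<epsilon> B) \<longrightarrow> z \<in> nullB B)
       \<and> (\<forall>w. Poly_Mapping.keys w \<subseteq> qproj (HBplus \<epsilon> B) ` UNIV \<times> UNIV \<longrightarrow>
              (\<exists>z. canmap \<Delta> (HBplus \<epsilon> B) z - w \<in> nullQ s t (HBplus \<epsilon> B)))"
proof -
  interpret galois_subring s t \<Delta> \<epsilon> B \<delta>
    using hopf comod galois by (rule galois_subringI)
  show ?thesis
    using canmap_nullB canmap_injective canmap_surjective by (auto simp: cong_mod_def)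
qed

end
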